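(* Let \(E\) be a semilattice with unit and zero. Open subsets of \(\hat E\) correspond bijectively to ideals in \(E\). To an open subset \(A\subseteq\hat E\) corresponds the ideal \(I_A=\{e\in E:U_e\subseteq A\}\). To an ideal \(I\) corresponds the open subset \(A_I=\{\varphi\in\hat E:\varphi(e)=1\text{ for some }e\in I\}=\bigcup_{e\in I}U_e\).
   Context: A semilattice is a commutative semigroup of idempotents with unit \(1\) and zero \(0\), ordered by \(e\le f\iff ef=e\). An ideal in \(E\) is a subset \(I\subseteq E\) containing \(0\) such that \(ef\in I\) whenever \(e\in E\) and \(f\in I\) (equivalently, \(e\in I\) whenever \(f\in I\) and \(e\le f\)). A character on \(E\) is a map \(\varphi\colon E\to\{0,1\}\) with \(\varphi(0)=0\), \(\varphi(1)=1\), \(\varphi(ef)=\varphi(e)\varphi(f)\). \(\hat E\) is the set of characters, \(U_e=\{\varphi:\varphi(e)=1\}\), and \(\hat E\) carries the topology generated by the sets \(U_e\). *)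

theory Defs
  imports "HOL-Analysis.Analysis"
begin

text \<open>A semilattice with unit and zero is modelled by the type class
  semilattice_inf + order_bot + order_top: the product e f is inf e f,
  the unit 1 is top, the zero 0 is bot, and e \<le> f iff inf e f = e.\<close>

definition sl_character :: "('a::{semilattice_inf,order_bot,order_top} \<Rightarrow> nat) \<Rightarrow> bool" where
  "sl_character \<phi> \<longleftrightarrow> (\<forall>e. \<phi> e \<in> {0,1}) \<and> \<phi> bot = 0 \<and> \<phi> top = 1 \<and>
     (\<forall>e f. \<phi> (inf e f) = \<phi> e * \<phi> f)"

definition sl_characters :: "('a::{semilattice_inf,order_bot,order_top} \<Rightarrow> nat) set" where
  "sl_characters = {\<phi>. sl_character \<phi>}"

definition U_set :: "'a::{semilattice_inf,order_bot,order_top} \<Rightarrow> ('a \<Rightarrow> nat) set" where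
  "U_set e = {\<phi> \<in> sl_characters. \<phi> e = 1}"

definition char_topology :: "('a::{semilattice_inf,order_bot,order_top} \<Rightarrow> nat) topology" where
  "char_topology = topology_generated_by (range U_set)"

definition sl_ideal :: "'a::{semilattice_inf,order_bot,order_top} set \<Rightarrow> bool" where
  "sl_ideal I \<longleftrightarrow> bot \<in> I \<and> (\<forall>e f. f \<in> I \<longrightarrow> inf e f \<in> I)"

definition ideal_of_open :: "('a::{semilattice_inf,order_bot,order_top} \<Rightarrow> nat) set \<Rightarrow> 'a set" where
  "ideal_of_open A = {e. U_set e \<subseteq> A}"

definition open_of_ideal :: "'a::{semilattice_inf,order_bot,order_top} set \<Rightarrow> ('a \<Rightarrow> nat) set" where
  "open_of_ideal I = {\<phi> \<in> sl_characters. \<exists>e\<in>I. \<phi> e = 1}"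

end

theory Submission
  imports Defs
begin

text \<open>Since \<open>U_set (inf e f) = U_set e \<inter> U_set f\<close>, the sets \<open>U_set e\<close> form a base of the
  topology on characters, so an open set is the union of the basic sets it contains, i.e.
  of those indexed by its ideal. Conversely an ideal is recovered from its open set
  because every \<open>e \<noteq> bot\<close> has the principal character \<open>\<lambda>x. [e \<le> x]\<close>, which lies in
  \<open>U_set f\<close> only for \<open>f \<ge> e\<close>.\<close>

lemma generate_topology_on_Int_closed_iff:
  assumes Int_closed: "\<And>S T. S \<in> \<B> \<Longrightarrow> T \<in> \<B> \<Longrightarrow> S \<inter> T \<in> \<B>"
  shows "generate_topology_on \<B> A \<longleftrightarrow> A = \<Union>{B \<in> \<B>. B \<subseteq> A}"
proof
  assume "generate_topology_on \<B> A"
  then have "A \<subseteq> \<Union>{B \<in> \<B>. B \<subseteq> A}"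
  proof (induction rule: generate_topology_on.induct)
    case (Int a b)
    show ?case
    proof
      fix x assume "x \<in> a \<inter> b"
      then obtain S T where "S \<in> \<B>" "S \<subseteq> a" "x \<in> S" "T \<in> \<B>" "T \<subseteq> b" "x \<in> T"
        using Int.IH by blast
      with Int_closed show "x \<in> \<Union>{B \<in> \<B>. B \<subseteq> a \<inter> b}"
        by blast
    qed
  qed blast+
  then show "A = \<Union>{B \<in> \<B>. B \<subseteq> A}"
    by blast
next
  assume "A = \<Union>{B \<in> \<B>. B \<subseteq> A}"
  moreover have "generate_topology_on \<B> (\<Union>{B \<in> \<B>. B \<subseteq> A})"
    by (auto intro: generate_topology_on.UN generate_topology_on.Basis)
  ultimately show "generate_topology_on \<B> A"
    by simp
qed

lemma U_set_inf: "U_set (inf e f) = U_set e \<inter> U_set f"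
  by (auto simp: U_set_def sl_characters_def sl_character_def)

lemma U_set_bot: "U_set bot = {}"
  by (auto simp: U_set_def sl_characters_def sl_character_def)

lemma open_of_ideal_eq_UN: "open_of_ideal I = (\<Union>e\<in>I. U_set e)"
  by (auto simp: open_of_ideal_def U_set_def)

lemma openin_char_topology_iff:
  "openin char_topology A \<longleftrightarrow> open_of_ideal (ideal_of_open A) = A"
proof -
  have "\<Union>{B \<in> range U_set. B \<subseteq> A} = open_of_ideal (ideal_of_open A)"
    by (auto simp: open_of_ideal_eq_UN ideal_of_open_def)
  then show ?thesis
    unfolding char_topology_def openin_topology_generated_by_iff
    by (subst generate_topology_on_Int_closed_iff) (auto simp flip: U_set_inf)
qed

lemma openin_open_of_ideal: "openin char_topology (open_of_ideal I)"
  unfolding open_of_ideal_eq_UN char_topology_def openin_topology_generated_by_iff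
  by (auto intro: generate_topology_on.UN generate_topology_on.Basis)

lemma sl_ideal_ideal_of_open: "sl_ideal (ideal_of_open A)"
  by (auto simp: sl_ideal_def ideal_of_open_def U_set_inf U_set_bot)

lemma sl_ideal_downward_closed:
  assumes "sl_ideal I" "f \<in> I" "e \<le> f"
  shows "e \<in> I"
  by (metis assms inf_absorb1 sl_ideal_def)

lemma principal_character_in_U_set:
  fixes e :: "'a::{semilattice_inf,order_bot,order_top}"
  assumes "e \<noteq> bot"
  shows "(\<lambda>x. if e \<le> x then 1 else 0 :: nat) \<in> U_set e"
  using assms bot_unique by (auto simp: U_set_def sl_characters_def sl_character_def)

lemma ideal_of_open_of_ideal:
  assumes "sl_ideal I"
  shows "ideal_of_open (open_of_ideal I) = I"
proof
  show "I \<subseteq> ideal_of_open (open_of_ideal I)"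
    by (auto simp: ideal_of_open_def open_of_ideal_eq_UN)
  show "ideal_of_open (open_of_ideal I) \<subseteq> I"
  proof
    fix e assume e: "e \<in> ideal_of_open (open_of_ideal I)"
    show "e \<in> I"
    proof (cases "e = bot")
      case True
      with assms show ?thesis by (simp add: sl_ideal_def)
    next
      case False
      then have "(\<lambda>x. if e \<le> x then 1 else 0 :: nat) \<in> open_of_ideal I"
        using principal_character_in_U_set e by (auto simp: ideal_of_open_def)
      then obtain f where "f \<in> I" "e \<le> f"
        by (auto simp: open_of_ideal_def split: if_splits)
      with assms show ?thesis by (rule sl_ideal_downward_closed)
    qed
  qed
qed

theorem lemma2p14:
  shows "bij_betw (ideal_of_open :: ('a::{semilattice_inf,order_bot,order_top} \<Rightarrow> nat) set \<Rightarrow> 'a set)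
            {A. openin char_topology A} {I. sl_ideal I}
       \<and> (\<forall>A. openin (char_topology :: ('a \<Rightarrow> nat) topology) A \<longrightarrow>
              sl_ideal (ideal_of_open A) \<and> open_of_ideal (ideal_of_open A) = A)
       \<and> (\<forall>I::'a set. sl_ideal I \<longrightarrow>
              openin char_topology (open_of_ideal I) \<and> ideal_of_open (open_of_ideal I) = I
              \<and> open_of_ideal I = (\<Union>e\<in>I. U_set e))"
proof (intro conjI allI impI)
  show "bij_betw (ideal_of_open :: ('a \<Rightarrow> nat) set \<Rightarrow> 'a set)
          {A. openin char_topology A} {I. sl_ideal I}"
    by (rule bij_betw_byWitness[where f' = open_of_ideal])
      (auto simp: openin_char_topology_iff ideal_of_open_of_ideal sl_ideal_ideal_of_open
         openin_open_of_ideal)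
next
  fix A :: "('a \<Rightarrow> nat) set"
  assume "openin char_topology A"
  then show "open_of_ideal (ideal_of_open A) = A"
    by (simp add: openin_char_topology_iff)
qed (simp_all add: sl_ideal_ideal_of_open openin_open_of_ideal ideal_of_open_of_ideal
       open_of_ideal_eq_UN[symmetric])

end
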